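(* With the notation of the context, let $$\rho^*=\frac{\eta T}{W\left(\lambda\gamma s_0\eta^2Te^{(\nu-\frac{\eta^2}{2})T}\right)}\frac{\mu-r}{\sigma}.$$ If $\rho^*\le-1$, then $d$ is increasing on $(-1,1)$. If $\rho^*\ge1$, then $d$ is decreasing on $(-1,1)$. If $-1<\rho^*<1$, then $d$ is decreasing on $(-1,\rho^* )$ and increasing on $(\rho^*,1)$, $$d(\rho^* )=d(0)-e^{-rT}\frac{(\mu-r)^2T}{2\gamma\sigma^2},\qquad g(\rho^* )=g(0)-e^{-rT}\frac{(\mu-r)^2T}{2\gamma\sigma^2},$$ and moreover $$\inf_{\rho\in(-1,1)}p(\rho)\ge d(0)-\frac{e^{-rT}}{2\gamma}\left(\frac{\mu-r}{\sigma}\right)^2T,\qquad \inf_{\rho\in(-1,1)}V_\rho(x_0,s_0,\lambda)\ge-\frac1\gamma\exp\left(-\gamma e^{rT}(x_0+d(0))\right).$$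
   Context: Fix $T>0$, $r,\nu,\mu,x_0\in\mathbb R$, $\eta>0$, $\sigma>0$, $s_0>0$, $\lambda>0$, $\gamma>0$; $N$ is a standard Gaussian random variable; $W$ is the Lambert function (inverse of $x\in(-1,\infty)\mapsto xe^x$). For $\rho\in(-1,1)$ let $\theta(\rho)=\lambda\gamma(1-\rho^2)$, $w(\rho)=W\left(s_0\eta^2Te^{(\nu-\eta\rho\frac{\mu-r}{\sigma}-\frac{\eta^2}{2})T}\theta(\rho)\right)$, $$d(\rho)=\frac{\lambda e^{-rT}}{\theta(\rho)\eta^2T}w(\rho)\left(1+\frac{w(\rho)}2\right),\qquad g(\rho)=\frac{\lambda e^{-rT}}{\theta(\rho)}\frac{w(\rho)}{\eta^2T}\left(e^{\frac{\eta^2}{2}T}+\frac{w(\rho)}2\right),$$ $$p(\rho)=-\frac{e^{-rT}}{\gamma(1-\rho^2)}\ln\mathbb E\exp\left(-\theta(\rho)s_0e^{(\nu-\eta\rho\frac{\mu-r}{\sigma}-\frac{\eta^2}{2})T}e^{\eta\sqrt TN}\right),$$ $$V_\rho(x_0,s_0,\lambda)=-\frac1\gamma\exp\left(-\gamma e^{rT}(x_0+p(\rho))-\frac{(\mu-r)^2}{2\sigma^2}T\right).$$ Here $p(\rho)$ and $V_\rho$ are the asking reservation price and the value function of an exponential-utility agent receiving $\lambda$ units of a non-traded stock ($dS=S(\nu dt+\eta dZ)$), hedging with a traded asset ($dP=P(\mu dt+\sigma dB)$) of correlation $\rho$, bond rate $r$. *)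

theory Defs
  imports "HOL-Probability.Probability"
begin

definition lambertW :: "real \<Rightarrow> real" where
  "lambertW y = (THE w. w > -1 \<and> w * exp w = y)"

definition gauss_expect :: "(real \<Rightarrow> real) \<Rightarrow> real" where
  "gauss_expect f = integral\<^sup>L (density lborel std_normal_density) f"

definition theta :: "real \<Rightarrow> real \<Rightarrow> real \<Rightarrow> real" where
  "theta lam gam \<rho> = lam * gam * (1 - \<rho>\<^sup>2)"

definition drift :: "real \<Rightarrow> real \<Rightarrow> real \<Rightarrow> real \<Rightarrow> real \<Rightarrow> real \<Rightarrow> real" where
  "drift r nu mu sig eta \<rho> = nu - eta * \<rho> * ((mu - r) / sig) - eta\<^sup>2 / 2"

definition wfun :: "real \<Rightarrow> real \<Rightarrow> real \<Rightarrow> real \<Rightarrow> real \<Rightarrow> real \<Rightarrow> real \<Rightarrow> real \<Rightarrow> real \<Rightarrow> real \<Rightarrow> real" where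
  "wfun T r nu mu sig eta s0 lam gam \<rho> =
     lambertW (s0 * eta\<^sup>2 * T * exp (drift r nu mu sig eta \<rho> * T) * theta lam gam \<rho>)"

definition dfun :: "real \<Rightarrow> real \<Rightarrow> real \<Rightarrow> real \<Rightarrow> real \<Rightarrow> real \<Rightarrow> real \<Rightarrow> real \<Rightarrow> real \<Rightarrow> real \<Rightarrow> real" where
  "dfun T r nu mu sig eta s0 lam gam \<rho> =
     (let w = wfun T r nu mu sig eta s0 lam gam \<rho> in
      lam * exp (- r * T) / (theta lam gam \<rho> * eta\<^sup>2 * T) * w * (1 + w / 2))"

definition gfun :: "real \<Rightarrow> real \<Rightarrow> real \<Rightarrow> real \<Rightarrow> real \<Rightarrow> real \<Rightarrow> real \<Rightarrow> real \<Rightarrow> real \<Rightarrow> real \<Rightarrow> real" where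
  "gfun T r nu mu sig eta s0 lam gam \<rho> =
     (let w = wfun T r nu mu sig eta s0 lam gam \<rho> in
      lam * exp (- r * T) / theta lam gam \<rho> * (w / (eta\<^sup>2 * T)) * (exp (eta\<^sup>2 / 2 * T) + w / 2))"

definition pfun :: "real \<Rightarrow> real \<Rightarrow> real \<Rightarrow> real \<Rightarrow> real \<Rightarrow> real \<Rightarrow> real \<Rightarrow> real \<Rightarrow> real \<Rightarrow> real \<Rightarrow> real" where
  "pfun T r nu mu sig eta s0 lam gam \<rho> =
     - (exp (- r * T) / (gam * (1 - \<rho>\<^sup>2))) *
       ln (gauss_expect (\<lambda>n. exp (- theta lam gam \<rho> * s0 * exp (drift r nu mu sig eta \<rho> * T)
                                    * exp (eta * sqrt T * n))))"

definition Vfun :: "real \<Rightarrow> real \<Rightarrow> real \<Rightarrow> real \<Rightarrow> real \<Rightarrow> real \<Rightarrow> real \<Rightarrow> real \<Rightarrow> real \<Rightarrow> real \<Rightarrow> real \<Rightarrow> real" where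
  "Vfun T r nu mu sig eta x0 s0 lam gam \<rho> =
     - (1 / gam) * exp (- gam * exp (r * T) * (x0 + pfun T r nu mu sig eta s0 lam gam \<rho>)
                        - (mu - r)\<^sup>2 / (2 * sig\<^sup>2) * T)"

end

theory Submission
  imports Defs
begin

(* With K = lam gam s0 eta^2 T e^((nu - eta^2/2) T) and a = eta T (mu - r) / sig one has
   w(rho) = W(K (1 - rho^2) e^(-a rho)), and d, g are positive multiples of
   w (E + w/2) / (1 - rho^2) with E = 1 and E = e^(eta^2 T / 2) respectively.
   Implicit differentiation shows that d'(rho) is a positive multiple of rho w - a (1 - rho^2).
   Comparing w(rho) with (1 - rho^2) W(K) through the monotonicity of x e^x shows that this
   has the sign of rho - rho_star, where rho_star = a / W(K), and that
   w(rho_star) = (1 - rho_star^2) W(K), which yields the values of d and g at rho_star.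
   For the price, the tangent line of exp at -w(rho) together with the Gaussian moment
   generating function gives p(rho) >= d(rho) >= d(rho_star); the bound on V follows since
   V is increasing in p. *)

lemma strict_mono_on_sgn_diff:
  fixes f :: "'a::linordered_idom \<Rightarrow> 'a"
  assumes "strict_mono_on S f" "x \<in> S" "y \<in> S"
  shows "sgn (f x - f y) = sgn (x - y)"
  using assms by (cases x y rule: linorder_cases) (auto dest: strict_mono_onD)

lemma strict_mono_on_mult_exp: "strict_mono_on {0..} (\<lambda>x::real. x * exp x)"
  by (rule strict_mono_onI) (auto intro: mult_strict_mono)

lemma lambertW_eqI:
  assumes "0 < w" "w * exp w = y"
  shows "lambertW y = w"
  unfolding lambertW_def
proof (rule the_equality)
  fix v assume v: "v > -1 \<and> v * exp v = y"
  then have "0 < v * exp v"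
    using assms by (metis exp_gt_zero mult_pos_pos)
  then have "0 < v"
    by (simp add: zero_less_mult_iff)
  with v assms show "v = w"
    using strict_mono_on_imp_inj_on[OF strict_mono_on_mult_exp] by (auto dest: inj_onD)
qed (use assms in auto)

lemma lambertW_pos: "0 < y \<Longrightarrow> 0 < lambertW y"
  and lambertW_mult_exp: "0 < y \<Longrightarrow> lambertW y * exp (lambertW y) = y"
proof -
  assume "0 < y"
  have "\<forall>x. 0 \<le> x \<and> x \<le> y \<longrightarrow> isCont (\<lambda>x. x * exp x) x"
    by (auto intro!: continuous_intros)
  then obtain w where "0 \<le> w" "w * exp w = y"
    using IVT[of "\<lambda>x. x * exp x" 0 y y] \<open>0 < y\<close> by auto
  then have "0 < w"
    using \<open>0 < y\<close> by (auto simp: le_less)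
  then show "0 < lambertW y" "lambertW y * exp (lambertW y) = y"
    using lambertW_eqI \<open>w * exp w = y\<close> by auto
qed

lemma lambertW_has_real_derivative:
  assumes "0 < y"
  shows "(lambertW has_real_derivative lambertW y / (y * (1 + lambertW y))) (at y)"
proof -
  obtain w where w: "lambertW y = w" "0 < w" "w * exp w = y"
    using lambertW_pos lambertW_mult_exp assms by blast
  have "isCont lambertW ((\<lambda>x. x * exp x) w)"
  proof (rule isCont_inverse_function[where f="\<lambda>x. x * exp x" and x=w and d="w / 2"])
    fix z assume "\<bar>z - w\<bar> \<le> w / 2"
    then have "0 < z"
      using w by arith
    then show "lambertW (z * exp z) = z"
      by (intro lambertW_eqI) auto
  qed (use w in \<open>auto intro!: continuous_intros\<close>)
  then have "isCont lambertW y"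
    using w by simp
  have "(lambertW has_real_derivative inverse ((1 + w) * exp w)) (at y)"
  proof (rule DERIV_inverse_function[where f="\<lambda>x. x * exp x" and a=0 and b="y + 1"])
    show "((\<lambda>x. x * exp x) has_real_derivative (1 + w) * exp w) (at (lambertW y))"
      using w by (auto intro!: derivative_eq_intros simp: algebra_simps)
  qed (use w assms \<open>isCont lambertW y\<close> lambertW_mult_exp in auto)
  moreover have "inverse ((1 + w) * exp w) = w / (y * (1 + w))"
    unfolding w(3)[symmetric] using w(2) by (simp add: divide_inverse mult.commute)
  ultimately show ?thesis
    using w by simp
qed

lemma std_normal_mgf:
  "integrable (density lborel std_normal_density) (\<lambda>x. exp (b * x))"
  "integral\<^sup>L (density lborel std_normal_density) (\<lambda>x. exp (b * x)) = exp (b\<^sup>2 / 2)"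
proof -
  have shift: "std_normal_density x * exp (b * x) = exp (b\<^sup>2 / 2) * normal_density b 1 x" for x
  proof -
    have "- x\<^sup>2 / 2 + b * x = b\<^sup>2 / 2 + (- (x - b)\<^sup>2 / (2 * 1\<^sup>2))"
      by (simp add: power2_eq_square field_simps)
    then show ?thesis
      unfolding std_normal_density_def normal_density_def by (simp flip: exp_add)
  qed
  have "integrable lborel (\<lambda>x. std_normal_density x * exp (b * x))"
    unfolding shift by simp
  then show "integrable (density lborel std_normal_density) (\<lambda>x. exp (b * x))"
    by (subst integrable_density) auto
  have "integral\<^sup>L (density lborel std_normal_density) (\<lambda>x. exp (b * x))
      = integral\<^sup>L lborel (\<lambda>x. std_normal_density x * exp (b * x))"
    by (subst integral_density) auto
  also have "\<dots> = exp (b\<^sup>2 / 2)"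
    unfolding shift by simp
  finally show "integral\<^sup>L (density lborel std_normal_density) (\<lambda>x. exp (b * x)) = exp (b\<^sup>2 / 2)" .
qed

lemma ln_gauss_expect_exp_exp_le:
  fixes c s :: real
  assumes "c < 0" and "0 < s"
  defines "w \<equiv> lambertW (- c * s\<^sup>2)"
  shows "ln (gauss_expect (\<lambda>n. exp (c * exp (s * n)))) \<le> - (w + w\<^sup>2 / 2) / s\<^sup>2"
proof -
  let ?M = "density lborel std_normal_density"
  let ?f = "\<lambda>n. exp (c * exp (s * n))"
  interpret prob_space ?M
    by (rule prob_space_normal_density) simp
  have "0 < - c * s\<^sup>2"
    using assms(1,2) by (simp add: mult_neg_pos)
  then have w: "0 < w" "c * s\<^sup>2 = - w * exp w"
    unfolding w_def using lambertW_pos lambertW_mult_exp by (auto simp: algebra_simps)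
  have f_integrable: "integrable ?M ?f"
    by (rule integrable_const_bound[where B=1]) (use assms(1,2) in \<open>auto simp: mult_neg_pos less_imp_le\<close>)
  have "0 < gauss_expect ?f"
    unfolding gauss_expect_def
    using f_integrable integral_nonneg_eq_0_iff_AE[OF f_integrable] AE_False
    by (simp add: integral_nonneg_AE less_le)
  \<comment> \<open>Tangent line of exp at -w: this tangent point minimises the resulting bound.\<close>
  define \<kappa> where "\<kappa> = c * exp (- w)"
  define \<alpha> where "\<alpha> = \<kappa> * (1 + w)"
  define \<beta> where "\<beta> = \<kappa> * s"
  have tangent: "?f n \<le> exp \<alpha> * exp (\<beta> * n)" for n
  proof -
    have "exp (- w) * (1 + (s * n + w)) \<le> exp (- w) * exp (s * n + w)"
      by (intro mult_left_mono exp_ge_add_one_self) auto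
    then have "c * exp (s * n) \<le> c * (exp (- w) * (1 + (s * n + w)))"
      using assms(1,2) by (intro mult_left_mono_neg) (auto simp flip: exp_add)
    also have "\<dots> = \<alpha> + \<beta> * n"
      unfolding \<alpha>_def \<beta>_def \<kappa>_def by (simp add: algebra_simps)
    finally show ?thesis
      by (simp flip: exp_add)
  qed
  have "gauss_expect ?f \<le> integral\<^sup>L ?M (\<lambda>n. exp \<alpha> * exp (\<beta> * n))"
    unfolding gauss_expect_def
    by (rule integral_mono[OF f_integrable]) (use std_normal_mgf(1) tangent in auto)
  also have "\<dots> = exp (\<alpha> + \<beta>\<^sup>2 / 2)"
    using std_normal_mgf(2) by (simp add: exp_add)
  also have "\<alpha> + \<beta>\<^sup>2 / 2 = - (w + w\<^sup>2 / 2) / s\<^sup>2"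
  proof -
    have \<kappa>: "\<kappa> = - w / s\<^sup>2"
      unfolding \<kappa>_def using w assms(1,2) by (simp add: field_simps exp_minus)
    show ?thesis
      unfolding \<alpha>_def \<beta>_def \<kappa> using assms(2) by (simp add: field_simps power2_eq_square)
  qed
  finally show ?thesis
    using \<open>0 < gauss_expect ?f\<close> by (metis exp_gt_zero ln_exp ln_le_cancel_iff)
qed

lemma sgn_add_mult_pos:
  fixes x y q :: real
  assumes "sgn x = 0 \<or> sgn x = sgn y" and "0 < q"
  shows "sgn (x + q * y) = sgn y"
  using assms by (cases y "0::real" rule: linorder_cases)
    (auto simp: sgn_0_0 sgn_1_pos sgn_1_neg intro: add_nonneg_pos add_nonpos_neg mult_pos_pos mult_pos_neg)

locale lambert_profile =
  fixes K a :: real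
  assumes K_pos: "0 < K"
begin

definition W :: "real \<Rightarrow> real" where
  "W \<rho> = lambertW (K * (1 - \<rho>\<^sup>2) * exp (- a * \<rho>))"

definition w0 :: real where
  "w0 = lambertW K"

definition rho_star :: real where
  "rho_star = a / w0"

definition profile :: "real \<Rightarrow> real \<Rightarrow> real" where
  "profile E \<rho> = W \<rho> * (E + W \<rho> / 2) / (1 - \<rho>\<^sup>2)"

lemma W_pos: "\<bar>\<rho>\<bar> < 1 \<Longrightarrow> 0 < W \<rho>"
  and W_mult_exp: "\<bar>\<rho>\<bar> < 1 \<Longrightarrow> W \<rho> * exp (W \<rho>) = K * (1 - \<rho>\<^sup>2) * exp (- a * \<rho>)"
  unfolding W_def using K_pos by (auto intro!: lambertW_pos lambertW_mult_exp simp: abs_square_less_1)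

lemma w0_pos: "0 < w0"
  and w0_mult_exp: "w0 * exp w0 = K"
  unfolding w0_def using K_pos lambertW_pos lambertW_mult_exp by auto

lemma W_0: "W 0 = w0"
  unfolding W_def w0_def by simp

lemma sgn_W_diff:
  assumes "\<bar>\<rho>\<bar> < 1"
  shows "sgn (W \<rho> - (1 - \<rho>\<^sup>2) * w0) = sgn (\<rho> * (\<rho> * w0 - a))"
proof -
  let ?v = "(1 - \<rho>\<^sup>2) * w0"
  have q: "0 < 1 - \<rho>\<^sup>2"
    using assms by (simp add: abs_square_less_1)
  then have "0 \<le> ?v"
    using w0_pos by simp
  have "exp ?v = exp w0 * exp (- (\<rho>\<^sup>2 * w0))"
    by (simp add: algebra_simps flip: exp_add)
  then have v: "?v * exp ?v = K * (1 - \<rho>\<^sup>2) * exp (- (\<rho>\<^sup>2 * w0))"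
    using w0_mult_exp by (simp add: ac_simps)
  have exp_mono: "strict_mono_on UNIV (exp :: real \<Rightarrow> real)"
    by (rule strict_mono_onI) simp
  have "sgn (W \<rho> - ?v) = sgn (W \<rho> * exp (W \<rho>) - ?v * exp ?v)"
    using strict_mono_on_sgn_diff[OF strict_mono_on_mult_exp, of "W \<rho>" ?v] W_pos[OF assms] \<open>0 \<le> ?v\<close>
    by simp
  also have "\<dots> = sgn (K * (1 - \<rho>\<^sup>2)) * sgn (exp (- a * \<rho>) - exp (- (\<rho>\<^sup>2 * w0)))"
    unfolding W_mult_exp[OF assms] v by (simp flip: sgn_mult add: right_diff_distrib)
  also have "\<dots> = sgn (- a * \<rho> - - (\<rho>\<^sup>2 * w0))"
    using strict_mono_on_sgn_diff[OF exp_mono] K_pos q by simp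
  also have "\<dots> = sgn (\<rho> * (\<rho> * w0 - a))"
    by (simp add: algebra_simps power2_eq_square)
  finally show ?thesis .
qed

lemma sgn_profile_slope:
  assumes "\<bar>\<rho>\<bar> < 1"
  shows "sgn (\<rho> * W \<rho> - a * (1 - \<rho>\<^sup>2)) = sgn (\<rho> - rho_star)"
proof -
  let ?v = "(1 - \<rho>\<^sup>2) * w0"
  have q: "0 < 1 - \<rho>\<^sup>2"
    using assms by (simp add: abs_square_less_1)
  \<comment> \<open>By sgn_W_diff both summands have the sign of rho * w0 - a (the first one possibly 0).\<close>
  have split: "\<rho> * W \<rho> - a * (1 - \<rho>\<^sup>2) = \<rho> * (W \<rho> - ?v) + (1 - \<rho>\<^sup>2) * (\<rho> * w0 - a)"
    by (simp add: algebra_simps)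
  have "sgn (\<rho> * (W \<rho> - ?v)) = 0 \<or> sgn (\<rho> * (W \<rho> - ?v)) = sgn (\<rho> * w0 - a)"
    using sgn_W_diff[OF assms] by (auto simp: sgn_mult)
  then have "sgn (\<rho> * W \<rho> - a * (1 - \<rho>\<^sup>2)) = sgn (\<rho> * w0 - a)"
    unfolding split using q by (rule sgn_add_mult_pos)
  also have "\<rho> * w0 - a = w0 * (\<rho> - rho_star)"
    unfolding rho_star_def using w0_pos by (simp add: field_simps)
  finally show ?thesis
    using w0_pos by (simp add: sgn_mult)
qed

lemma W_has_real_derivative:
  assumes "\<bar>\<rho>\<bar> < 1"
  shows "(W has_real_derivative - W \<rho> * (2 * \<rho> + a * (1 - \<rho>\<^sup>2)) / ((1 - \<rho>\<^sup>2) * (1 + W \<rho>))) (at \<rho>)"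
proof -
  let ?k = "K * exp (- a * \<rho>)" and ?x = "2 * \<rho> + a * (1 - \<rho>\<^sup>2)"
  have q: "0 < 1 - \<rho>\<^sup>2"
    using assms by (simp add: abs_square_less_1)
  have "((\<lambda>\<rho>. K * (1 - \<rho>\<^sup>2) * exp (- a * \<rho>)) has_real_derivative - ?k * ?x) (at \<rho>)"
    by (auto intro!: derivative_eq_intros simp: algebra_simps)
  from DERIV_chain2[OF lambertW_has_real_derivative this]
  have "(W has_real_derivative W \<rho> / (?k * (1 - \<rho>\<^sup>2) * (1 + W \<rho>)) * (- ?k * ?x)) (at \<rho>)"
    unfolding W_def[abs_def] using K_pos q by (simp add: ac_simps)
  moreover have "w / (k * q * (1 + w)) * (- k * x) = - w * x / (q * (1 + w))"
    if "k \<noteq> 0" "q \<noteq> 0" "1 + w \<noteq> 0" for k q w x :: real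
    using that by (simp add: divide_simps)
  moreover have "1 + W \<rho> \<noteq> 0"
    using W_pos[OF assms] by simp
  ultimately show ?thesis
    using K_pos q by simp
qed

lemma profile_one_has_real_derivative:
  assumes "\<bar>\<rho>\<bar> < 1"
  shows "(profile 1 has_real_derivative W \<rho> * (\<rho> * W \<rho> - a * (1 - \<rho>\<^sup>2)) / (1 - \<rho>\<^sup>2)\<^sup>2) (at \<rho>)"
proof -
  let ?q = "1 - \<rho>\<^sup>2" and ?x = "2 * \<rho> + a * (1 - \<rho>\<^sup>2)"
  have "0 < ?q"
    using assms by (simp add: abs_square_less_1)
  have w: "0 < W \<rho>"
    using W_pos[OF assms] .
  have "((\<lambda>w. w * (1 + w / 2)) has_real_derivative 1 + W \<rho>) (at (W \<rho>))"
    by (auto intro!: derivative_eq_intros)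
  from DERIV_chain2[OF this W_has_real_derivative[OF assms]]
  have "((\<lambda>\<rho>. W \<rho> * (1 + W \<rho> / 2)) has_real_derivative - W \<rho> * ?x / ?q) (at \<rho>)"
    using w by simp
  moreover have "((\<lambda>\<rho>. 1 - \<rho>\<^sup>2) has_real_derivative - (2 * \<rho>)) (at \<rho>)"
    by (auto intro!: derivative_eq_intros)
  ultimately have "(profile 1 has_real_derivative
      (- W \<rho> * ?x / ?q * ?q - W \<rho> * (1 + W \<rho> / 2) * - (2 * \<rho>)) / (?q * ?q)) (at \<rho>)"
    unfolding profile_def[abs_def] using \<open>0 < ?q\<close> by (intro DERIV_divide) auto
  moreover have "(- w * (2 * \<rho> + a * q) / q * q - w * (1 + w / 2) * - (2 * \<rho>)) / (q * q)
      = w * (\<rho> * w - a * q) / q\<^sup>2" if "q \<noteq> 0" for q w :: real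
    using that by (simp add: field_simps power2_eq_square)
  ultimately show ?thesis
    using \<open>0 < ?q\<close> by simp
qed

lemma continuous_on_profile_one: "continuous_on {-1<..<1} (profile 1)"
proof (intro continuous_at_imp_continuous_on ballI)
  fix x :: real
  assume "x \<in> {-1<..<1}"
  then show "isCont (profile 1) x"
    by (intro DERIV_isCont[OF profile_one_has_real_derivative]) auto
qed

lemma profile_one_strict_mono_on: "strict_mono_on ({-1<..<1} \<inter> {rho_star..}) (profile 1)"
proof (rule strict_mono_onI)
  fix x y
  assume x: "x \<in> {-1<..<1} \<inter> {rho_star..}" and y: "y \<in> {-1<..<1} \<inter> {rho_star..}" and "x < y"
  show "profile 1 x < profile 1 y"
  proof (rule DERIV_pos_imp_increasing_open[OF \<open>x < y\<close>])
    fix t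
    assume "x < t" "t < y"
    then have t: "\<bar>t\<bar> < 1" "rho_star < t"
      using x y by auto
    then have "0 < t * W t - a * (1 - t\<^sup>2)"
      using sgn_profile_slope[OF t(1)] by (simp add: sgn_1_pos)
    moreover have "0 < (1 - t\<^sup>2)\<^sup>2"
      using t(1) by (simp add: abs_square_eq_1)
    ultimately have "0 < W t * (t * W t - a * (1 - t\<^sup>2)) / (1 - t\<^sup>2)\<^sup>2"
      using W_pos[OF t(1)] by (intro divide_pos_pos mult_pos_pos)
    then show "\<exists>D. (profile 1 has_real_derivative D) (at t) \<and> 0 < D"
      using profile_one_has_real_derivative[OF t(1)] by blast
  qed (use continuous_on_profile_one x y in \<open>auto elim!: continuous_on_subset\<close>)
qed

lemma profile_one_strict_antimono_on: "strict_antimono_on ({-1<..<1} \<inter> {..rho_star}) (profile 1)"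
proof (rule monotone_onI)
  fix x y
  assume x: "x \<in> {-1<..<1} \<inter> {..rho_star}" and y: "y \<in> {-1<..<1} \<inter> {..rho_star}" and "x < y"
  show "profile 1 y < profile 1 x"
  proof (rule DERIV_neg_imp_decreasing_open[OF \<open>x < y\<close>])
    fix t
    assume "x < t" "t < y"
    then have t: "\<bar>t\<bar> < 1" "t < rho_star"
      using x y by auto
    then have "t * W t - a * (1 - t\<^sup>2) < 0"
      using sgn_profile_slope[OF t(1)] by (simp add: sgn_1_neg)
    moreover have "0 < (1 - t\<^sup>2)\<^sup>2"
      using t(1) by (simp add: abs_square_eq_1)
    ultimately have "W t * (t * W t - a * (1 - t\<^sup>2)) / (1 - t\<^sup>2)\<^sup>2 < 0"
      using W_pos[OF t(1)] by (intro divide_neg_pos mult_pos_neg)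
    then show "\<exists>D. (profile 1 has_real_derivative D) (at t) \<and> D < 0"
      using profile_one_has_real_derivative[OF t(1)] by blast
  qed (use continuous_on_profile_one x y in \<open>auto elim!: continuous_on_subset\<close>)
qed

lemma profile_one_rho_star_le:
  assumes "\<bar>rho_star\<bar> < 1" and "\<bar>\<rho>\<bar> < 1"
  shows "profile 1 rho_star \<le> profile 1 \<rho>"
  using assms strict_mono_onD[OF profile_one_strict_mono_on, of rho_star \<rho>]
    monotone_onD[OF profile_one_strict_antimono_on, of \<rho> rho_star]
  by (cases \<rho> rho_star rule: linorder_cases) (auto simp: abs_less_iff)

lemma W_rho_star:
  assumes "\<bar>rho_star\<bar> < 1"
  shows "W rho_star = (1 - rho_star\<^sup>2) * w0"
  using sgn_W_diff[OF assms] w0_pos by (simp add: rho_star_def sgn_0_0)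

lemma profile_rho_star:
  assumes "\<bar>rho_star\<bar> < 1"
  shows "profile E rho_star = profile E 0 - a\<^sup>2 / 2"
proof -
  have "0 < 1 - rho_star\<^sup>2"
    using assms by (simp add: abs_square_less_1)
  moreover have "a = rho_star * w0"
    unfolding rho_star_def using w0_pos by simp
  moreover have "q * w * (E + q * w / 2) / q = w * (E + w / 2) - (\<rho> * w)\<^sup>2 / 2"
    if "q = 1 - \<rho>\<^sup>2" "q \<noteq> 0" for q \<rho> w :: real
    using that(2) unfolding that(1) by (simp add: field_simps power2_eq_square)
  ultimately show ?thesis
    unfolding profile_def W_rho_star[OF assms] W_0 by simp
qed

end

locale incomplete_market =
  fixes T r nu mu sig eta s0 lam gam :: real
  assumes T_pos: "0 < T" and eta_pos: "0 < eta" and sig_pos: "0 < sig"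
    and s0_pos: "0 < s0" and lam_pos: "0 < lam" and gam_pos: "0 < gam"
begin

definition K :: real where
  "K = lam * gam * s0 * eta\<^sup>2 * T * exp ((nu - eta\<^sup>2 / 2) * T)"

definition a :: real where
  "a = eta * T * ((mu - r) / sig)"

definition c :: real where
  "c = exp (- r * T) / (gam * eta\<^sup>2 * T)"

sublocale lambert_profile K a
  by unfold_locales (use T_pos eta_pos s0_pos lam_pos gam_pos in \<open>simp add: K_def\<close>)

lemma c_pos: "0 < c"
  unfolding c_def using T_pos eta_pos gam_pos by simp

lemma c_mult_a_sq: "c * a\<^sup>2 / 2 = exp (- r * T) * (mu - r)\<^sup>2 * T / (2 * gam * sig\<^sup>2)"
  unfolding c_def a_def using T_pos eta_pos sig_pos gam_pos by (simp add: field_simps power2_eq_square)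

lemma rho_star_eq:
  "rho_star = eta * T / lambertW (lam * gam * s0 * eta\<^sup>2 * T * exp ((nu - eta\<^sup>2 / 2) * T)) * ((mu - r) / sig)"
  unfolding rho_star_def w0_def unfolding K_def a_def by simp

lemma wfun_eq: "wfun T r nu mu sig eta s0 lam gam \<rho> = W \<rho>"
proof -
  have "exp (drift r nu mu sig eta \<rho> * T) = exp ((nu - eta\<^sup>2 / 2) * T) * exp (- a * \<rho>)"
    unfolding drift_def a_def by (simp add: algebra_simps flip: exp_add)
  then show ?thesis
    unfolding wfun_def W_def theta_def unfolding K_def by (simp add: ac_simps)
qed

lemma dfun_eq: "dfun T r nu mu sig eta s0 lam gam \<rho> = c * profile 1 \<rho>"
  unfolding dfun_def profile_def wfun_eq c_def theta_def Let_def
  using T_pos eta_pos lam_pos gam_pos by (cases "1 - \<rho>\<^sup>2 = 0") (simp_all add: field_simps)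

lemma gfun_eq: "gfun T r nu mu sig eta s0 lam gam \<rho> = c * profile (exp (eta\<^sup>2 / 2 * T)) \<rho>"
  unfolding gfun_def profile_def wfun_eq c_def theta_def Let_def
  using T_pos eta_pos lam_pos gam_pos by (cases "1 - \<rho>\<^sup>2 = 0") (simp_all add: field_simps)

lemma dfun_strict_mono_on: "strict_mono_on ({-1<..<1} \<inter> {rho_star..}) (dfun T r nu mu sig eta s0 lam gam)"
  using profile_one_strict_mono_on c_pos by (simp add: monotone_on_def dfun_eq)

lemma dfun_strict_antimono_on: "strict_antimono_on ({-1<..<1} \<inter> {..rho_star}) (dfun T r nu mu sig eta s0 lam gam)"
  using profile_one_strict_antimono_on c_pos by (simp add: monotone_on_def dfun_eq)

lemma dfun_rho_star:
  assumes "\<bar>rho_star\<bar> < 1"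
  shows "dfun T r nu mu sig eta s0 lam gam rho_star
    = dfun T r nu mu sig eta s0 lam gam 0 - exp (- r * T) * (mu - r)\<^sup>2 * T / (2 * gam * sig\<^sup>2)"
  unfolding dfun_eq profile_rho_star[OF assms] c_mult_a_sq[symmetric] by (simp add: algebra_simps)

lemma gfun_rho_star:
  assumes "\<bar>rho_star\<bar> < 1"
  shows "gfun T r nu mu sig eta s0 lam gam rho_star
    = gfun T r nu mu sig eta s0 lam gam 0 - exp (- r * T) * (mu - r)\<^sup>2 * T / (2 * gam * sig\<^sup>2)"
  unfolding gfun_eq profile_rho_star[OF assms] c_mult_a_sq[symmetric] by (simp add: algebra_simps)

lemma dfun_le_pfun:
  assumes "\<bar>\<rho>\<bar> < 1"
  shows "dfun T r nu mu sig eta s0 lam gam \<rho> \<le> pfun T r nu mu sig eta s0 lam gam \<rho>"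
proof -
  let ?c = "- theta lam gam \<rho> * s0 * exp (drift r nu mu sig eta \<rho> * T)" and ?s = "eta * sqrt T"
  let ?k = "exp (- r * T) / (gam * (1 - \<rho>\<^sup>2))" and ?x = "(W \<rho> + (W \<rho>)\<^sup>2 / 2) / (eta\<^sup>2 * T)"
  let ?E = "gauss_expect (\<lambda>n. exp (?c * exp (?s * n)))"
  have q: "0 < 1 - \<rho>\<^sup>2"
    using assms by (simp add: abs_square_less_1)
  have "?c < 0"
    unfolding theta_def using q s0_pos lam_pos gam_pos by (simp add: mult_pos_pos)
  have "0 < ?s"
    using eta_pos T_pos by simp
  have s_sq: "?s\<^sup>2 = eta\<^sup>2 * T"
    using T_pos by (simp add: power_mult_distrib)
  have "- ?c * ?s\<^sup>2 = s0 * eta\<^sup>2 * T * exp (drift r nu mu sig eta \<rho> * T) * theta lam gam \<rho>"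
    unfolding s_sq by (simp add: ac_simps)
  then have w: "lambertW (- ?c * ?s\<^sup>2) = W \<rho>"
    unfolding wfun_eq[symmetric] wfun_def by (rule arg_cong)
  have "ln ?E \<le> - (W \<rho> + (W \<rho>)\<^sup>2 / 2) / (eta\<^sup>2 * T)"
    using ln_gauss_expect_exp_exp_le[OF \<open>?c < 0\<close> \<open>0 < ?s\<close>] unfolding w unfolding s_sq .
  then have "ln ?E \<le> - ?x"
    by (simp only: minus_divide_left)
  then have "?k * ?x \<le> - ?k * ln ?E"
    using mult_left_mono[of "ln ?E" "- ?x" ?k] q gam_pos by simp
  also have "\<dots> = pfun T r nu mu sig eta s0 lam gam \<rho>"
    unfolding pfun_def by simp
  also have "?k * ?x = dfun T r nu mu sig eta s0 lam gam \<rho>"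
    unfolding dfun_eq c_def profile_def by (simp add: field_simps power2_eq_square)
  finally show ?thesis .
qed

lemma pfun_lower_bound:
  assumes "\<bar>rho_star\<bar> < 1" and "\<bar>\<rho>\<bar> < 1"
  shows "dfun T r nu mu sig eta s0 lam gam 0 - exp (- r * T) * (mu - r)\<^sup>2 * T / (2 * gam * sig\<^sup>2)
    \<le> pfun T r nu mu sig eta s0 lam gam \<rho>"
proof -
  have "dfun T r nu mu sig eta s0 lam gam rho_star \<le> dfun T r nu mu sig eta s0 lam gam \<rho>"
    unfolding dfun_eq using profile_one_rho_star_le[OF assms] c_pos by simp
  then show ?thesis
    using dfun_rho_star[OF assms(1)] dfun_le_pfun[OF assms(2)] by simp
qed

lemma Vfun_lower_bound:
  assumes "q - exp (- r * T) * (mu - r)\<^sup>2 * T / (2 * gam * sig\<^sup>2) \<le> pfun T r nu mu sig eta s0 lam gam \<rho>"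
  shows "- (1 / gam) * exp (- gam * exp (r * T) * (x0 + q)) \<le> Vfun T r nu mu sig eta x0 s0 lam gam \<rho>"
proof -
  let ?k = "(mu - r)\<^sup>2 / (2 * sig\<^sup>2) * T" and ?e = "gam * exp (r * T)"
  have "?e * (exp (- r * T) * (mu - r)\<^sup>2 * T / (2 * gam * sig\<^sup>2))
      = exp (r * T) * exp (- r * T) * (gam / gam) * ?k"
    by (simp add: field_simps)
  also have "\<dots> = ?k"
    using gam_pos by (simp flip: exp_add)
  finally have premium: "?e * (exp (- r * T) * (mu - r)\<^sup>2 * T / (2 * gam * sig\<^sup>2)) = ?k" .
  have "?e * (q - exp (- r * T) * (mu - r)\<^sup>2 * T / (2 * gam * sig\<^sup>2))
      \<le> ?e * pfun T r nu mu sig eta s0 lam gam \<rho>"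
    using assms gam_pos by (intro mult_left_mono) auto
  then have "?e * q - ?k \<le> ?e * pfun T r nu mu sig eta s0 lam gam \<rho>"
    unfolding right_diff_distrib premium .
  then have "- gam * exp (r * T) * (x0 + pfun T r nu mu sig eta s0 lam gam \<rho>) - ?k
      \<le> - gam * exp (r * T) * (x0 + q)"
    by (simp add: algebra_simps)
  then show ?thesis
    unfolding Vfun_def using gam_pos by (intro mult_left_mono_neg) auto
qed

end

theorem proposition2:
  fixes T r nu mu x0 eta sig s0 lam gam :: real
  assumes "T > 0" and "eta > 0" and "sig > 0" and "s0 > 0" and "lam > 0" and "gam > 0"
  defines "d \<equiv> dfun T r nu mu sig eta s0 lam gam"
      and "g \<equiv> gfun T r nu mu sig eta s0 lam gam"
      and "p \<equiv> pfun T r nu mu sig eta s0 lam gam"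
      and "V \<equiv> Vfun T r nu mu sig eta x0 s0 lam gam"
      and "\<rho>s \<equiv> eta * T / lambertW (lam * gam * s0 * eta\<^sup>2 * T * exp ((nu - eta\<^sup>2 / 2) * T))
                 * ((mu - r) / sig)"
  shows "(\<rho>s \<le> -1 \<longrightarrow> strict_mono_on {-1<..<1} d)
       \<and> (\<rho>s \<ge> 1 \<longrightarrow> strict_antimono_on {-1<..<1} d)
       \<and> (-1 < \<rho>s \<and> \<rho>s < 1 \<longrightarrow>
            strict_antimono_on {-1<..<\<rho>s} d
          \<and> strict_mono_on {\<rho>s<..<1} d
          \<and> d \<rho>s = d 0 - exp (- r * T) * (mu - r)\<^sup>2 * T / (2 * gam * sig\<^sup>2)
          \<and> g \<rho>s = g 0 - exp (- r * T) * (mu - r)\<^sup>2 * T / (2 * gam * sig\<^sup>2)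
          \<and> (INF \<rho>\<in>{-1<..<1}. ereal (p \<rho>))
               \<ge> ereal (d 0 - exp (- r * T) / (2 * gam) * ((mu - r) / sig)\<^sup>2 * T)
          \<and> (INF \<rho>\<in>{-1<..<1}. ereal (V \<rho>))
               \<ge> ereal (- (1 / gam) * exp (- gam * exp (r * T) * (x0 + d 0))))"
proof -
  interpret incomplete_market T r nu mu sig eta s0 lam gam
    using assms(1-6) by unfold_locales
  have \<rho>s: "\<rho>s = rho_star"
    unfolding \<rho>s_def rho_star_eq ..
  have mono: "strict_mono_on ({-1<..<1} \<inter> {\<rho>s..}) d"
    unfolding d_def \<rho>s by (rule dfun_strict_mono_on)
  have anti: "strict_antimono_on ({-1<..<1} \<inter> {..\<rho>s}) d"
    unfolding d_def \<rho>s by (rule dfun_strict_antimono_on)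
  have premium: "exp (- r * T) / (2 * gam) * ((mu - r) / sig)\<^sup>2 * T
      = exp (- r * T) * (mu - r)\<^sup>2 * T / (2 * gam * sig\<^sup>2)"
    by (simp add: power_divide)
  show ?thesis
  proof (intro conjI impI)
    assume "-1 < \<rho>s \<and> \<rho>s < 1"
    then have "\<bar>rho_star\<bar> < 1"
      unfolding \<rho>s by auto
    show "d \<rho>s = d 0 - exp (- r * T) * (mu - r)\<^sup>2 * T / (2 * gam * sig\<^sup>2)"
      unfolding d_def \<rho>s by (rule dfun_rho_star) fact
    show "g \<rho>s = g 0 - exp (- r * T) * (mu - r)\<^sup>2 * T / (2 * gam * sig\<^sup>2)"
      unfolding g_def \<rho>s by (rule gfun_rho_star) fact
    show "(INF \<rho>\<in>{-1<..<1}. ereal (p \<rho>)) \<ge> ereal (d 0 - exp (- r * T) / (2 * gam) * ((mu - r) / sig)\<^sup>2 * T)"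
      unfolding premium p_def d_def
      using pfun_lower_bound[OF \<open>\<bar>rho_star\<bar> < 1\<close>] by (intro INF_greatest) (simp add: abs_less_iff)
    show "(INF \<rho>\<in>{-1<..<1}. ereal (V \<rho>)) \<ge> ereal (- (1 / gam) * exp (- gam * exp (r * T) * (x0 + d 0)))"
      unfolding V_def d_def
      using Vfun_lower_bound pfun_lower_bound[OF \<open>\<bar>rho_star\<bar> < 1\<close>] by (intro INF_greatest) (simp add: abs_less_iff)
  qed (auto intro: monotone_on_subset[OF mono] monotone_on_subset[OF anti])
qed

end
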